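(* Let $\mathcal H_1=\mathcal H_2=\mathbb C^2$ and let $|\phi_1\rangle\in\mathcal H_2\otimes\mathcal H_1$ be a unit vector. The two-outcome qubit $1$-tester $T_1=\frac12|\phi_1\rangle\langle\phi_1|$, $T_2=\frac12(I_2\otimes I_1-|\phi_1\rangle\langle\phi_1|)$ (with normalization $I_2\otimes\frac12I_1$) is extremal if and only if $|\phi_1\rangle$ is not a product vector $|f\rangle\otimes|e\rangle$.
   Context: A quantum $1$-tester with $M$ outcomes is a family of positive operators $\{T_i\}_{i=1}^M$ on $\mathcal H_2\otimes\mathcal H_1$ with $\sum_iT_i=I_2\otimes\rho$ for a density operator $\rho$ on $\mathcal H_1$; extremal means an extreme point of the convex set of all such testers with $M$ outcomes. *)

theory Defs
  imports "HOL-Analysis.Analysis"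
begin

text \<open>The tensor product
 H2 (x) H1 is indexed by the product type 'b \<times> 'a (first component = H2 index).\<close>

definition psd :: "complex^'n^'n \<Rightarrow> bool" where
  "psd A \<longleftrightarrow> (\<forall>x::complex^'n.
      Im (\<Sum>i\<in>UNIV. \<Sum>j\<in>UNIV. cnj (x$i) * A$i$j * x$j) = 0 \<and>
      Re (\<Sum>i\<in>UNIV. \<Sum>j\<in>UNIV. cnj (x$i) * A$i$j * x$j) \<ge> 0)"

definition density :: "complex^'n^'n \<Rightarrow> bool" where
  "density \<rho> \<longleftrightarrow> psd \<rho> \<and> trace \<rho> = 1"

definition kron :: "complex^'b^'b \<Rightarrow> complex^'a^'a \<Rightarrow> complex^('b \<times> 'a)^('b \<times> 'a)" where
  "kron A B = (\<chi> i j. A$(fst i)$(fst j) * B$(snd i)$(snd j))"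

definition tensor_vec :: "complex^'b \<Rightarrow> complex^'a \<Rightarrow> complex^('b \<times> 'a)" where
  "tensor_vec f e = (\<chi> i. f$(fst i) * e$(snd i))"

definition ketbra :: "complex^'n \<Rightarrow> complex^'n^'n" where
  "ketbra \<phi> = (\<chi> i j. \<phi>$i * cnj (\<phi>$j))"

definition is_tester :: "nat \<Rightarrow> (nat \<Rightarrow> complex^('b::finite \<times> 'a::finite)^('b \<times> 'a)) \<Rightarrow> bool" where
  "is_tester M T \<longleftrightarrow> (\<forall>i\<in>{1..M}. psd (T i)) \<and>
     (\<exists>\<rho>::complex^'a^'a. density \<rho> \<and> (\<Sum>i=1..M. T i) = kron (mat 1 :: complex^'b^'b) \<rho>)"

definition extremal_tester :: "nat \<Rightarrow> (nat \<Rightarrow> complex^('b::finite \<times> 'a::finite)^('b \<times> 'a)) \<Rightarrow> bool" where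
  "extremal_tester M T \<longleftrightarrow> is_tester M T \<and>
     (\<forall>S U (t::real). is_tester M S \<and> is_tester M U \<and> 0 < t \<and> t < 1 \<and>
        (\<forall>i\<in>{1..M}. T i = t *\<^sub>R S i + (1 - t) *\<^sub>R U i)
        \<longrightarrow> (\<forall>i\<in>{1..M}. S i = T i \<and> U i = T i))"

end

theory Submission
  imports Defs
begin

(* Entangled phi.  If T = t S + (1-t) U is a proper mixture of testers, positivity forces
   S1 to vanish on phi-perp and S2 to annihilate phi (null vectors of a mixture are null
   vectors of its components).  Then S1 = a |phi><phi|, hence (I (x) sigma) phi = a phi for
   the normalization sigma of S.  Writing phi as a 2x2 coefficient matrix, entanglement
   means this matrix is invertible, which forces sigma = a I; the trace gives a = 1/2 and
   so S = T (and then U = T).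

   Product phi = f (x) e.  An explicit affine family of testers, with normalization
   rho_p = p |e><e| + (1-p) |e_perp><e_perp|, passes through T at p = 1/2; so T is the
   midpoint of two different testers. *)

section \<open>Inner products and matrix elements\<close>

(* The inner product <y|x> on complex^'n, antilinear in the first argument. *)
definition braket :: "complex^'n \<Rightarrow> complex^'n \<Rightarrow> complex" where
  "braket y x = (\<Sum>i\<in>UNIV. cnj (y$i) * x$i)"

definition sandwich :: "complex^'n^'n \<Rightarrow> complex^'n \<Rightarrow> complex^'n \<Rightarrow> complex" where
  "sandwich A y x = (\<Sum>i\<in>UNIV. \<Sum>j\<in>UNIV. cnj (y$i) * A$i$j * x$j)"

lemma psd_sandwich: "psd A \<longleftrightarrow> (\<forall>x. Im (sandwich A x x) = 0 \<and> Re (sandwich A x x) \<ge> 0)"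
  by (simp add: psd_def sandwich_def)

lemma sandwich_eq_braket_mult: "sandwich A y x = braket y (A *v x)"
  by (simp add: sandwich_def braket_def matrix_vector_mult_def sum_distrib_left mult.assoc)

lemma braket_diff_left: "braket (y - z) x = braket y x - braket z x"
  by (simp add: braket_def ring_distribs sum_subtractf)
lemma braket_diff_right: "braket y (x - z) = braket y x - braket y z"
  by (simp add: braket_def ring_distribs sum_subtractf)
lemma braket_smult_left: "braket (c *s y) x = cnj c * braket y x"
  by (simp add: braket_def sum_distrib_left mult.assoc)
lemma braket_smult_right: "braket y (c *s x) = c * braket y x"
  by (simp add: braket_def sum_distrib_left algebra_simps)
lemma braket_cnj: "braket y x = cnj (braket x y)"
  by (simp add: braket_def mult.commute)
lemma braket_axis: "braket (axis k 1) x = x$k"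
proof -
  have "cnj (axis k 1 $ i) * x$i = (if i = k then x$k else 0)" for i
    by (simp add: axis_def)
  then show ?thesis by (simp add: braket_def)
qed

lemma vector_eq_by_braket: "(\<And>y. braket y x = braket y z) \<Longrightarrow> x = z"
  by (metis braket_axis vec_eq_iff)

lemma braket_self: "braket x x = of_real (\<Sum>i\<in>UNIV. (cmod (x$i))\<^sup>2)"
proof -
  have "cnj (x$i) * x$i = of_real ((cmod (x$i))\<^sup>2)" for i
    by (simp only: complex_norm_square mult.commute)
  then show ?thesis by (simp only: braket_def of_real_sum)
qed

lemma braket_self_nonneg: "Im (braket x x) = 0 \<and> Re (braket x x) \<ge> 0"
  by (simp add: braket_self sum_nonneg)

lemma braket_self_norm: "braket x x = of_real ((norm x)\<^sup>2)"
  by (simp add: braket_self norm_vec_def L2_set_def sum_nonneg)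

lemma sandwich_add_left: "sandwich A (y + z) x = sandwich A y x + sandwich A z x"
  by (simp add: sandwich_def ring_distribs sum.distrib)
lemma sandwich_add_right: "sandwich A y (x + z) = sandwich A y x + sandwich A y z"
  by (simp add: sandwich_def ring_distribs sum.distrib)
lemma sandwich_smult_left: "sandwich A (c *s y) x = cnj c * sandwich A y x"
  by (simp add: sandwich_def sum_distrib_left mult.assoc)
lemma sandwich_smult_right: "sandwich A y (c *s x) = c * sandwich A y x"
  by (simp add: sandwich_def sum_distrib_left algebra_simps)
lemma sandwich_add: "sandwich (A + B) y x = sandwich A y x + sandwich B y x"
  by (simp add: sandwich_def ring_distribs sum.distrib)
lemma sandwich_diff: "sandwich (A - B) y x = sandwich A y x - sandwich B y x"
  by (simp add: sandwich_def ring_distribs sum_subtractf)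

lemma scaleR_complex_component: "(c *\<^sub>R x)$i = of_real c * (x$i :: complex)"
  by (simp only: vector_scaleR_component) (simp add: scaleR_conv_of_real)

lemma scaleR_matrix_component: "(c *\<^sub>R A)$i$j = of_real c * (A$i$j :: complex)"
  by (simp only: vector_scaleR_component) (simp add: scaleR_conv_of_real)

lemma sandwich_scaleR: "sandwich (c *\<^sub>R A) y x = of_real c * sandwich A y x"
  by (simp only: sandwich_def scaleR_matrix_component sum_distrib_left) (simp add: algebra_simps)
lemma sandwich_mat1: "sandwich (mat 1) y x = braket y x"
  by (simp add: sandwich_eq_braket_mult braket_def)
lemma sandwich_ketbra: "sandwich (ketbra v) y x = braket y v * braket v x"
  by (simp add: sandwich_def braket_def ketbra_def sum_product algebra_simps)
lemma sandwich_axis: "sandwich A (axis i 1) (axis j 1) = A$i$j"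
proof -
  have "A$i$k * axis j 1 $ k = (if k = j then A$i$j else 0)" for k
    by (simp add: axis_def)
  then show ?thesis by (simp add: sandwich_eq_braket_mult braket_axis matrix_vector_mult_def)
qed

lemma matrix_eq_by_sandwich: "(\<And>y x. sandwich A y x = sandwich B y x) \<Longrightarrow> A = B"
  by (metis sandwich_axis vec_eq_iff)

section \<open>Positive operators\<close>

lemma psd_ketbra: "psd (ketbra v)"
proof -
  have "sandwich (ketbra v) x x = of_real ((cmod (braket v x))\<^sup>2)" for x
    by (metis sandwich_ketbra braket_cnj complex_norm_square mult.commute)
  then show ?thesis by (simp add: psd_sandwich)
qed

lemma psd_scaleR: "psd A \<Longrightarrow> c \<ge> 0 \<Longrightarrow> psd (c *\<^sub>R A)"
  by (simp add: psd_sandwich sandwich_scaleR)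

lemma psd_add: "psd A \<Longrightarrow> psd B \<Longrightarrow> psd (A + B)"
  by (simp add: psd_sandwich sandwich_add)

lemma psd_mat1: "psd (mat 1)"
  by (simp add: psd_sandwich sandwich_mat1 braket_self_nonneg)

lemma psd_complement_projector:
  assumes "braket \<phi> \<phi> = 1"
  shows "psd (mat 1 - ketbra \<phi>)"
proof -
  have "sandwich (mat 1 - ketbra \<phi>) x x = braket (x - braket \<phi> x *s \<phi>) (x - braket \<phi> x *s \<phi>)" for x
    using assms by (simp add: sandwich_diff sandwich_mat1 sandwich_ketbra braket_diff_left
      braket_diff_right braket_smult_left braket_smult_right braket_cnj[of x \<phi>] algebra_simps)
  then show ?thesis by (simp add: psd_sandwich braket_self_nonneg)
qed

lemma nonneg_quadratic_linear_coeff: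
  fixes c r :: real
  assumes nonneg: "\<And>s. 0 \<le> s * c + s\<^sup>2 * r" and "r \<ge> 0"
  shows "c = 0"
proof (rule ccontr)
  assume "c \<noteq> 0"
  define t where "t = 1 / (r + 1)"
  have t: "t * r + t = 1" "t > 0" using \<open>r \<ge> 0\<close> by (simp_all add: t_def field_simps)
  have "(-c * t) * c + (-c * t)\<^sup>2 * r = c\<^sup>2 * t * (t * r + t - 1) - c\<^sup>2 * t\<^sup>2"
    by (simp add: power2_eq_square algebra_simps)
  also have "\<dots> = - (c\<^sup>2 * t\<^sup>2)" using t by simp
  finally have "c\<^sup>2 * t\<^sup>2 \<le> 0" using nonneg[of "-c * t"] by simp
  moreover have "c\<^sup>2 * t\<^sup>2 > 0" using \<open>c \<noteq> 0\<close> t by simp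
  ultimately show False by simp
qed

(* If <x|A|x> = 0 for a positive A, then x is in the kernel: all matrix elements
   involving x vanish.  Proof: expand the positivity of x + w y for w = s, i s. *)
lemma psd_null_vector:
  assumes "psd A" and null: "sandwich A x x = 0"
  shows "sandwich A x y = 0" "sandwich A y x = 0"
proof -
  define p q r where "p = sandwich A x y" and "q = sandwich A y x" and "r = sandwich A y y"
  have pos: "Im (sandwich A z z) = 0 \<and> Re (sandwich A z z) \<ge> 0" for z
    using \<open>psd A\<close> by (simp add: psd_sandwich)
  have r: "Im r = 0" "Re r \<ge> 0" using pos[of y] by (auto simp: r_def)
  have expand: "sandwich A (x + w *s y) (x + w *s y) = w * p + cnj w * q + cnj w * w * r" for w
    using null by (simp add: sandwich_add_left sandwich_add_right sandwich_smult_left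
      sandwich_smult_right p_def q_def r_def algebra_simps)
  have "0 \<le> s * (Re p + Re q) + s\<^sup>2 * Re r" for s :: real
    using pos[of "x + of_real s *s y"] unfolding expand by (simp add: power2_eq_square algebra_simps)
  then have re: "Re p + Re q = 0" using nonneg_quadratic_linear_coeff r by blast
  have "0 \<le> s * (Im q - Im p) + s\<^sup>2 * Re r" for s :: real
    using pos[of "x + (\<i> * of_real s) *s y"] unfolding expand by (simp add: power2_eq_square algebra_simps)
  then have im: "Im q - Im p = 0" using nonneg_quadratic_linear_coeff r by blast
  have "Im p + Im q = 0" using pos[of "x + 1 *s y"] r unfolding expand by simp
  moreover have "Re p - Re q = 0" using pos[of "x + \<i> *s y"] r unfolding expand by simp
  ultimately have "p = 0" "q = 0" using re im by (auto simp: complex_eq_iff)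
  then show "sandwich A x y = 0" "sandwich A y x = 0" by (simp_all add: p_def q_def)
qed

lemma psd_mixture_null_vector:
  assumes "psd S" "psd U" "0 < t" "t < 1"
    and "sandwich (t *\<^sub>R S + (1 - t) *\<^sub>R U) x x = 0"
  shows "sandwich S x x = 0"
proof -
  have "t * Re (sandwich S x x) + (1 - t) * Re (sandwich U x x) = 0"
    using arg_cong[OF assms(5), of Re] by (simp add: sandwich_add sandwich_scaleR)
  moreover have "Re (sandwich S x x) \<ge> 0" "Re (sandwich U x x) \<ge> 0" "Im (sandwich S x x) = 0"
    using assms(1,2) by (auto simp: psd_sandwich)
  ultimately have "Re (sandwich S x x) = 0" using assms(3,4)
    by (smt (verit) mult_nonneg_nonneg mult_pos_pos)
  then show ?thesis using \<open>Im (sandwich S x x) = 0\<close> by (simp add: complex_eq_iff)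
qed

lemma psd_supported_on_line:
  assumes "psd S" and unit: "braket \<phi> \<phi> = 1"
    and vanish: "\<And>x. braket \<phi> x = 0 \<Longrightarrow> sandwich S x x = 0"
  shows "sandwich S y x = braket y \<phi> * sandwich S \<phi> \<phi> * braket \<phi> x"
proof -
  define rx ry where "rx = x - braket \<phi> x *s \<phi>" and "ry = y - braket \<phi> y *s \<phi>"
  have "braket \<phi> rx = 0" "braket \<phi> ry = 0"
    using unit by (simp_all add: rx_def ry_def braket_diff_right braket_smult_right)
  then have null: "sandwich S rx w = 0" "sandwich S w rx = 0" "sandwich S ry w = 0" "sandwich S w ry = 0" for w
    using psd_null_vector[OF \<open>psd S\<close> vanish] by blast+
  have "sandwich S y x = sandwich S (braket \<phi> y *s \<phi> + ry) (braket \<phi> x *s \<phi> + rx)"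
    by (simp add: rx_def ry_def)
  also have "\<dots> = cnj (braket \<phi> y) * sandwich S \<phi> \<phi> * braket \<phi> x"
    using null by (simp add: sandwich_add_left sandwich_add_right sandwich_smult_left sandwich_smult_right)
  finally show ?thesis by (simp add: braket_cnj[of y \<phi>])
qed

section \<open>Operators of the form I (x) sigma on two qubits\<close>

lemma kron_mat1_mult_component:
  "(kron (mat 1) \<sigma> *v \<psi>) $ (b, i) = (\<Sum>j\<in>UNIV. \<sigma>$i$j * \<psi>$(b, j))"
proof -
  have "(kron (mat 1) \<sigma> *v \<psi>) $ (b, i) = (\<Sum>b'\<in>UNIV. \<Sum>j\<in>UNIV. kron (mat 1) \<sigma> $ (b, i) $ (b', j) * \<psi>$(b', j))"
    by (simp add: matrix_vector_mult_def sum.cartesian_product' flip: UNIV_Times_UNIV)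
  also have "\<dots> = (\<Sum>b'\<in>UNIV. if b' = b then \<Sum>j\<in>UNIV. \<sigma>$i$j * \<psi>$(b, j) else 0)"
    by (intro sum.cong) (auto simp: kron_def mat_def)
  finally show ?thesis by simp
qed

lemma kron_mat: "kron (mat a) (mat b) = mat (a * b)"
  by (simp add: vec_eq_iff kron_def mat_def prod_eq_iff)

lemma scaleR_mat: "c *\<^sub>R mat a = (mat (of_real c * a) :: complex^'n^'n)"
  by (simp add: vec_eq_iff mat_def scaleR_matrix_component) (simp add: scaleR_conv_of_real)

lemma trace_mat2: "trace (mat a :: complex^2^2) = 2 * a"
  by (simp add: trace_def mat_def sum_2)

definition det2 :: "complex^(2 \<times> 2) \<Rightarrow> complex" where
  "det2 \<psi> = \<psi>$(1,1) * \<psi>$(2,2) - \<psi>$(1,2) * \<psi>$(2,1)"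

lemma product_vector_iff_det2:
  "(\<exists>f e. \<psi> = tensor_vec f e) \<longleftrightarrow> det2 \<psi> = 0"
proof
  assume "\<exists>f e. \<psi> = tensor_vec f e"
  then show "det2 \<psi> = 0" by (auto simp: det2_def tensor_vec_def)
next
  have vec22_eq: "(x::complex^(2\<times>2)) = y \<longleftrightarrow>
      x$(1,1) = y$(1,1) \<and> x$(1,2) = y$(1,2) \<and> x$(2,1) = y$(2,1) \<and> x$(2,2) = y$(2,2)" for x y
    by (auto simp add: vec_eq_iff forall_2 split_paired_all)
  assume det: "det2 \<psi> = 0"
  consider "\<psi>$(1,1) \<noteq> 0" | "\<psi>$(1,1) = 0" "\<psi>$(2,1) = 0" | "\<psi>$(1,1) = 0" "\<psi>$(1,2) = 0"
    using det unfolding det2_def by (metis mult_eq_0_iff mult_zero_left right_minus_eq)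
  then show "\<exists>f e. \<psi> = tensor_vec f e"
  proof cases
    case 1
    have "\<psi> = tensor_vec (\<chi> i. \<psi>$(i,1)) (\<chi> j. \<psi>$(1,j) / \<psi>$(1,1))"
      using 1 det by (simp add: vec22_eq tensor_vec_def det2_def field_simps)
    then show ?thesis by blast
  next
    case 2
    have "\<psi> = tensor_vec (\<chi> i. \<psi>$(i,2)) (axis 2 1)"
      using 2 by (simp add: vec22_eq tensor_vec_def axis_def)
    then show ?thesis by blast
  next
    case 3
    have "\<psi> = tensor_vec (axis 2 1) (\<chi> j. \<psi>$(2,j))"
      using 3 by (simp add: vec22_eq tensor_vec_def axis_def)
    then show ?thesis by blast
  qed
qed

lemma linear_system_2x2_trivial:
  fixes a b c d x y :: complex
  assumes "a * x + b * y = 0" "c * x + d * y = 0" "a * d - b * c \<noteq> 0"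
  shows "x = 0" "y = 0"
proof -
  have "x * (a * d - b * c) = d * (a * x + b * y) - b * (c * x + d * y)"
    "y * (a * d - b * c) = a * (c * x + d * y) - c * (a * x + b * y)"
    by (simp_all add: algebra_simps)
  then show "x = 0" "y = 0" using assms by simp_all
qed

(* Key rigidity fact: if an entangled vector is an eigenvector of I (x) sigma, then sigma
   is scalar.  Each row of sigma - a I is annihilated by the invertible coefficient matrix. *)
lemma entangled_eigenvector_forces_scalar:
  fixes \<psi> :: "complex^(2 \<times> 2)" and \<sigma> :: "complex^2^2"
  assumes eig: "kron (mat 1) \<sigma> *v \<psi> = a *s \<psi>" and ent: "det2 \<psi> \<noteq> 0"
  shows "\<sigma> = mat a"
proof -
  have row: "\<psi>$(b,1) * (\<sigma>$i$1 - mat a$i$1) + \<psi>$(b,2) * (\<sigma>$i$2 - mat a$i$2) = 0" for i b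
  proof -
    have "\<sigma>$i$1 * \<psi>$(b,1) + \<sigma>$i$2 * \<psi>$(b,2) = a * \<psi>$(b,i)"
      using arg_cong[OF eig, of "\<lambda>v. v $ (b, i)"] by (simp add: kron_mat1_mult_component sum_2)
    then show ?thesis using exhaust_2[of i] by (auto simp: mat_def algebra_simps)
  qed
  have "\<sigma>$i$j - mat a$i$j = 0" for i j
    using linear_system_2x2_trivial[OF row[where b=1] row[where b=2]] ent exhaust_2[of j]
    by (auto simp: det2_def)
  then show ?thesis by (simp add: vec_eq_iff)
qed

lemma sum_1_2: "(\<Sum>i=1..2. F i) = F (1::nat) + F 2"
  by (simp add: numeral_2_eq_2)

lemma is_tester_2_iff:
  "is_tester 2 T \<longleftrightarrow> psd (T 1) \<and> psd (T 2) \<and>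
     (\<exists>\<rho>::complex^'a^'a. density \<rho> \<and> T 1 + T 2 = kron (mat 1 :: complex^'b^'b) \<rho>)"
  for T :: "nat \<Rightarrow> complex^('b::finite \<times> 'a::finite)^('b \<times> 'a)"
proof -
  have "{1..2::nat} = {1, 2}" by auto
  then show ?thesis by (simp add: is_tester_def sum_1_2)
qed

lemma mixture_cancel:
  fixes X S U :: "'a::real_vector"
  assumes mix: "X = t *\<^sub>R S + (1 - t) *\<^sub>R U" and "S = X" and "t < 1"
  shows "U = X"
proof -
  have "(1 - t) *\<^sub>R U = (1 - t) *\<^sub>R X"
    using mix unfolding \<open>S = X\<close> by (simp add: algebra_simps) (metis add_diff_cancel diff_add_cancel)
  then show ?thesis using \<open>t < 1\<close> by simp
qed

lemma extremal_tester_2_iff: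
  "extremal_tester 2 T \<longleftrightarrow> is_tester 2 T \<and>
     (\<forall>S U (t::real). is_tester 2 S \<and> is_tester 2 U \<and> 0 < t \<and> t < 1 \<and>
        T 1 = t *\<^sub>R S 1 + (1 - t) *\<^sub>R U 1 \<and> T 2 = t *\<^sub>R S 2 + (1 - t) *\<^sub>R U 2
        \<longrightarrow> S 1 = T 1 \<and> S 2 = T 2)"
  for T :: "nat \<Rightarrow> complex^('b::finite \<times> 'a::finite)^('b \<times> 'a)"
proof -
  have two: "{1..2::nat} = {1, 2}" by auto
  show ?thesis
    unfolding extremal_tester_def two ball_simps
    by (intro iffI conjI allI impI; elim conjE; blast intro: mixture_cancel)
qed

section \<open>Entangled phi: extremality\<close>

definition half_projector_tester :: "complex^'n \<Rightarrow> nat \<Rightarrow> complex^'n^'n" where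
  "half_projector_tester \<phi> =
     (\<lambda>i. if i = 1 then (1/2) *\<^sub>R ketbra \<phi> else (1/2) *\<^sub>R (mat 1 - ketbra \<phi>))"

lemma half_projector_tester_outcomes:
  "half_projector_tester \<phi> 1 = (1/2) *\<^sub>R ketbra \<phi>"
  "half_projector_tester \<phi> 2 = (1/2) *\<^sub>R (mat 1 - ketbra \<phi>)"
  by (simp_all add: half_projector_tester_def)

lemma density_maximally_mixed: "density (mat (1/2) :: complex^2^2)"
proof -
  have "psd ((1/2) *\<^sub>R mat 1 :: complex^2^2)" by (simp add: psd_scaleR psd_mat1)
  then show ?thesis by (simp add: density_def scaleR_mat trace_mat2)
qed

lemma half_projector_is_tester:
  fixes \<phi> :: "complex^('b::finite \<times> 2)"
  assumes "braket \<phi> \<phi> = 1"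
  shows "is_tester 2 (half_projector_tester \<phi>)"
proof -
  have "half_projector_tester \<phi> 1 + half_projector_tester \<phi> 2 = kron (mat 1 :: complex^'b^'b) (mat (1/2))"
    by (simp add: half_projector_tester_outcomes kron_mat scaleR_mat del: One_nat_def
        flip: scaleR_right_distrib)
  then show ?thesis using assms density_maximally_mixed
    by (auto simp: is_tester_2_iff half_projector_tester_outcomes simp del: One_nat_def
        intro!: psd_scaleR psd_ketbra psd_complement_projector)
qed

(* Indeed S1 is a
   multiple a of |phi><phi|, so (I (x) sigma) phi = a phi, whence sigma = a I and a = 1/2. *)
lemma tester_supported_like_half_projector:
  fixes \<phi> :: "complex^(2 \<times> 2)" and S :: "nat \<Rightarrow> complex^(2 \<times> 2)^(2 \<times> 2)"
  assumes tester: "is_tester 2 S" and unit: "braket \<phi> \<phi> = 1" and ent: "det2 \<phi> \<noteq> 0"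
    and vanish1: "\<And>x. braket \<phi> x = 0 \<Longrightarrow> sandwich (S 1) x x = 0"
    and vanish2: "sandwich (S 2) \<phi> \<phi> = 0"
  shows "S 1 = half_projector_tester \<phi> 1" "S 2 = half_projector_tester \<phi> 2"
proof -
  obtain \<sigma> :: "complex^2^2" where psd: "psd (S 1)" "psd (S 2)" and \<sigma>: "density \<sigma>"
    and sum: "S 1 + S 2 = kron (mat 1 :: complex^2^2) \<sigma>"
    using tester by (auto simp: is_tester_2_iff)
  define a where "a = sandwich (S 1) \<phi> \<phi>"
  have S1: "sandwich (S 1) y x = braket y \<phi> * a * braket \<phi> x" for y x
    unfolding a_def using psd_supported_on_line[OF psd(1) unit vanish1] .
  have S2: "sandwich (S 2) y \<phi> = 0" for y
    using psd_null_vector(2)[OF psd(2) vanish2] .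
  have "kron (mat 1) \<sigma> *v \<phi> = a *s \<phi>"
  proof (rule vector_eq_by_braket)
    fix y
    show "braket y (kron (mat 1) \<sigma> *v \<phi>) = braket y (a *s \<phi>)"
      using S1[of y \<phi>] S2[of y] unit
      by (simp add: sum[symmetric] sandwich_add flip: sandwich_eq_braket_mult)
        (simp add: braket_smult_right)
  qed
  then have \<sigma>_scalar: "\<sigma> = mat a" using ent by (rule entangled_eigenvector_forces_scalar)
  then have "a = 1/2" using \<sigma> by (simp add: density_def trace_mat2 mult.commute)
  then show S1_eq: "S 1 = half_projector_tester \<phi> 1"
    by (intro matrix_eq_by_sandwich)
      (simp add: S1 half_projector_tester_outcomes sandwich_scaleR sandwich_ketbra del: One_nat_def)
  have "S 2 = kron (mat 1) \<sigma> - S 1" using sum by (simp add: algebra_simps)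
  also have "\<dots> = mat (1/2) - (1/2) *\<^sub>R ketbra \<phi>"
    using \<sigma>_scalar \<open>a = 1/2\<close> S1_eq by (simp add: kron_mat half_projector_tester_outcomes del: One_nat_def)
  finally show "S 2 = half_projector_tester \<phi> 2"
    by (simp add: half_projector_tester_outcomes scaleR_mat scaleR_diff_right)
qed

(* Every component of a decomposition inherits the support conditions (faces of the positive
   cone), so by the uniqueness lemma the half-projector tester is extremal. *)
theorem entangled_half_projector_extremal:
  fixes \<phi> :: "complex^(2 \<times> 2)"
  assumes unit: "braket \<phi> \<phi> = 1" and ent: "det2 \<phi> \<noteq> 0"
  shows "extremal_tester 2 (half_projector_tester \<phi>)"
  unfolding extremal_tester_2_iff
proof (intro conjI allI impI)
  let ?T = "half_projector_tester \<phi>"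
  show "is_tester 2 ?T" using unit by (rule half_projector_is_tester)
  fix S U and t :: real
  assume "is_tester 2 S \<and> is_tester 2 U \<and> 0 < t \<and> t < 1 \<and>
    ?T 1 = t *\<^sub>R S 1 + (1 - t) *\<^sub>R U 1 \<and> ?T 2 = t *\<^sub>R S 2 + (1 - t) *\<^sub>R U 2"
  then have S: "is_tester 2 S" and U: "is_tester 2 U" and t: "0 < t" "t < 1"
    and mix1: "?T 1 = t *\<^sub>R S 1 + (1 - t) *\<^sub>R U 1" and mix2: "?T 2 = t *\<^sub>R S 2 + (1 - t) *\<^sub>R U 2"
    by blast+
  have psd: "psd (S 1)" "psd (U 1)" "psd (S 2)" "psd (U 2)"
    using S U by (simp_all add: is_tester_2_iff)
  have "sandwich (S 1) x x = 0" if "braket \<phi> x = 0" for x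
    using psd_mixture_null_vector[OF psd(1,2) t] that
    by (simp add: mix1[symmetric] half_projector_tester_outcomes sandwich_scaleR sandwich_ketbra del: One_nat_def)
  moreover have "sandwich (S 2) \<phi> \<phi> = 0"
    using psd_mixture_null_vector[OF psd(3,4) t] unit
    by (simp add: mix2[symmetric] half_projector_tester_outcomes sandwich_scaleR sandwich_diff
        sandwich_mat1 sandwich_ketbra)
  ultimately show "S 1 = ?T 1" "S 2 = ?T 2"
    using tester_supported_like_half_projector[OF S unit ent] by blast+
qed

section \<open>Product phi: a proper decomposition\<close>

lemma ketbra_tensor: "ketbra (tensor_vec f e) = kron (ketbra f) (ketbra e)"
  by (simp add: vec_eq_iff ketbra_def kron_def tensor_vec_def)

lemma braket_tensor: "braket (tensor_vec f e) (tensor_vec f' e') = braket f f' * braket e e'"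
  by (simp add: braket_def tensor_vec_def sum_product sum.cartesian_product' algebra_simps
      flip: UNIV_Times_UNIV)

lemma kron_add_left: "kron (A + B) C = kron A C + kron B C"
  by (simp add: vec_eq_iff kron_def algebra_simps)
lemma kron_add_right: "kron A (B + C) = kron A B + kron A C"
  by (simp add: vec_eq_iff kron_def algebra_simps)
lemma kron_scaleR_right: "kron A (c *\<^sub>R B) = c *\<^sub>R kron A B"
  by (simp add: vec_eq_iff kron_def scaleR_matrix_component algebra_simps)

lemma trace_ketbra: "trace (ketbra u) = braket u u"
  by (simp add: trace_def braket_def ketbra_def mult.commute)
lemma trace_scaleR: "trace (c *\<^sub>R (A::complex^'n^'n)) = of_real c * trace A"
  unfolding trace_def scaleR_matrix_component by (simp add: sum_distrib_left)

definition qubit_perp :: "complex^2 \<Rightarrow> complex^2" where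
  "qubit_perp u = (\<chi> i. if i = 1 then - cnj (u$2) else cnj (u$1))"

lemma braket_2: "braket (u::complex^2) v = cnj (u$1) * v$1 + cnj (u$2) * v$2"
  by (simp add: braket_def sum_2)

lemma qubit_perp_unit: "braket u u = 1 \<Longrightarrow> braket (qubit_perp u) (qubit_perp u) = 1"
  by (simp add: qubit_perp_def braket_2 algebra_simps)

lemma qubit_resolution_identity: "braket u u = 1 \<Longrightarrow> ketbra u + ketbra (qubit_perp u) = mat 1"
  by (simp add: vec_eq_iff forall_2 ketbra_def qubit_perp_def mat_def braket_2 algebra_simps)

(* For phi = f (x) e, the family of testers with normalization rho_p = p |e><e| + (1-p) |e_perp><e_perp|:
   P1 = p |f e><f e|, P2 = p |f_perp e><f_perp e| + (1-p) I (x) |e_perp><e_perp|.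
   It depends affinely on p and equals the half-projector tester at p = 1/2. *)
definition product_tester :: "complex^2 \<Rightarrow> complex^2 \<Rightarrow> real \<Rightarrow> nat \<Rightarrow> complex^(2 \<times> 2)^(2 \<times> 2)" where
  "product_tester f e p = (\<lambda>i. if i = 1 then p *\<^sub>R ketbra (tensor_vec f e)
     else p *\<^sub>R ketbra (tensor_vec (qubit_perp f) e) + (1 - p) *\<^sub>R kron (mat 1) (ketbra (qubit_perp e)))"

lemma product_tester_is_tester:
  assumes f: "braket f f = 1" and e: "braket e e = 1" and p: "0 \<le> p" "p \<le> 1"
  shows "is_tester 2 (product_tester f e p)"
proof -
  define \<rho> where "\<rho> = p *\<^sub>R ketbra e + (1 - p) *\<^sub>R ketbra (qubit_perp e)"
  have I_kron: "kron (mat 1 :: complex^2^2) X = kron (ketbra f) X + kron (ketbra (qubit_perp f)) X" for X :: "complex^2^2"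
    using qubit_resolution_identity[OF f] by (metis kron_add_left)
  have "psd (kron (mat 1 :: complex^2^2) (ketbra (qubit_perp e)))"
    unfolding I_kron by (intro psd_add) (simp_all add: psd_ketbra flip: ketbra_tensor)
  then have psd: "psd (product_tester f e p 1)" "psd (product_tester f e p 2)"
    using p by (auto simp: product_tester_def intro!: psd_add psd_scaleR psd_ketbra
        simp del: One_nat_def)
  have "density \<rho>"
    using p e qubit_perp_unit[OF e] unfolding density_def \<rho>_def
    by (auto intro!: psd_add psd_scaleR psd_ketbra simp: trace_add trace_scaleR trace_ketbra)
  moreover have "product_tester f e p 1 + product_tester f e p 2 = kron (mat 1) \<rho>"
    unfolding product_tester_def \<rho>_def kron_add_right kron_scaleR_right I_kron ketbra_tensor
    by (simp add: algebra_simps del: One_nat_def)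
  ultimately show ?thesis using psd by (auto simp: is_tester_2_iff)
qed

lemma product_tester_half:
  assumes f: "braket f f = 1" and e: "braket e e = 1"
  shows "product_tester f e (1/2) = half_projector_tester (tensor_vec f e)"
proof -
  have "(mat 1 :: complex^(2 \<times> 2)^(2 \<times> 2)) = kron (mat 1) (ketbra e + ketbra (qubit_perp e))"
    by (simp add: qubit_resolution_identity[OF e] kron_mat)
  also have "\<dots> = ketbra (tensor_vec f e) + ketbra (tensor_vec (qubit_perp f) e)
      + kron (mat 1) (ketbra (qubit_perp e))"
    by (simp add: kron_add_right ketbra_tensor flip: kron_add_left qubit_resolution_identity[OF f])
  finally have I: "(mat 1 :: complex^(2 \<times> 2)^(2 \<times> 2)) = \<dots>" .
  show ?thesis
    by (rule ext) (simp add: product_tester_def half_projector_tester_def I algebra_simps)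
qed

lemma product_tester_affine:
  "product_tester f e (t * p + (1 - t) * q) i
     = t *\<^sub>R product_tester f e p i + (1 - t) *\<^sub>R product_tester f e q i"
  by (simp add: product_tester_def scaleR_add_right scaleR_diff_left scaleR_add_left algebra_simps)

theorem product_half_projector_not_extremal:
  fixes f e :: "complex^2"
  assumes f: "braket f f = 1" and e: "braket e e = 1"
  shows "\<not> extremal_tester 2 (half_projector_tester (tensor_vec f e))"
proof
  let ?P = "product_tester f e"
  assume "extremal_tester 2 (half_projector_tester (tensor_vec f e))"
  then have ext: "extremal_tester 2 (?P (1/2))" by (simp add: product_tester_half[OF f e])
  have mid: "?P (1/2) i = (1/2) *\<^sub>R ?P (3/4) i + (1 - 1/2) *\<^sub>R ?P (1/4) i" for i
    using product_tester_affine[of f e "1/2" "3/4" "1/4" i] by simp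
  have "is_tester 2 (?P (3/4))" "is_tester 2 (?P (1/4))"
    by (simp_all add: product_tester_is_tester f e)
  moreover have "0 < (1/2::real)" "(1/2::real) < 1" by simp_all
  ultimately have "?P (3/4) 1 = ?P (1/2) 1"
    using ext mid[of 1] mid[of 2] unfolding extremal_tester_2_iff by blast
  then have "sandwich (?P (3/4) 1) (tensor_vec f e) (tensor_vec f e)
      = sandwich (?P (1/2) 1) (tensor_vec f e) (tensor_vec f e)" by simp
  then show False
    by (simp add: product_tester_def sandwich_scaleR sandwich_ketbra braket_tensor f e)
qed

lemma tensor_vec_rescale: "c \<noteq> 0 \<Longrightarrow> tensor_vec ((1/c) *\<^sub>R f) (c *\<^sub>R e) = tensor_vec f e"
  by (simp add: tensor_vec_def vec_eq_iff scaleR_complex_component)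

lemma product_vector_unit_factors:
  fixes f :: "complex^'b" and e :: "complex^'a"
  assumes "braket (tensor_vec f e) (tensor_vec f e) = 1"
  obtains f' e' where "braket f' f' = 1" "braket e' e' = 1" "tensor_vec f e = tensor_vec f' e'"
proof -
  have "braket f f * braket e e = 1" using assms by (simp only: braket_tensor)
  then have "(norm f * norm e)\<^sup>2 = 1"
    unfolding braket_self_norm power_mult_distrib by (metis of_real_eq_1_iff of_real_mult)
  then have prod: "norm f * norm e = 1"
    by (metis power2_eq_iff_nonneg norm_ge_zero zero_le_one one_power2 mult_nonneg_nonneg)
  then have nf: "norm f \<noteq> 0" by auto
  show ?thesis
  proof
    show "braket ((1 / norm f) *\<^sub>R f) ((1 / norm f) *\<^sub>R f) = 1"
      using nf by (simp add: braket_self_norm)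
    show "braket (norm f *\<^sub>R e) (norm f *\<^sub>R e) = 1"
      using prod by (simp add: braket_self_norm)
    show "tensor_vec f e = tensor_vec ((1 / norm f) *\<^sub>R f) (norm f *\<^sub>R e)"
      using nf by (simp add: tensor_vec_rescale)
  qed
qed

theorem mainTheorem11:
  fixes \<phi> :: "complex^(2 \<times> 2)"
  assumes "norm \<phi> = 1"
  shows "extremal_tester 2
           (\<lambda>i. if i = 1 then (1/2) *\<^sub>R ketbra \<phi>
                 else (1/2) *\<^sub>R (mat 1 - ketbra \<phi>))
         \<longleftrightarrow> \<not> (\<exists>(f::complex^2) (e::complex^2). \<phi> = tensor_vec f e)"
proof -
  have unit: "braket \<phi> \<phi> = 1" using assms by (simp add: braket_self_norm)
  have "extremal_tester 2 (half_projector_tester \<phi>) \<longleftrightarrow> det2 \<phi> \<noteq> 0"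
  proof
    assume ext: "extremal_tester 2 (half_projector_tester \<phi>)"
    show "det2 \<phi> \<noteq> 0"
    proof
      assume "det2 \<phi> = 0"
      then obtain f e :: "complex^2" where "\<phi> = tensor_vec f e"
        using product_vector_iff_det2 by blast
      with unit obtain f' e' where "braket f' f' = 1" "braket e' e' = 1" "\<phi> = tensor_vec f' e'"
        by (metis product_vector_unit_factors)
      then show False using ext product_half_projector_not_extremal by blast
    qed
  qed (rule entangled_half_projector_extremal[OF unit])
  then show ?thesis
    unfolding half_projector_tester_def product_vector_iff_det2 .
qed

end
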